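(* Let $\mathbf n\ge 2$, let $A'=\mathbb C^{2\mathbf n-1}$ with basis $e_1,\dots,e_{2\mathbf n-1}$, and let $U,V\cong\mathbb C^{\mathbf n}$ with bases $u_1,\dots,u_{\mathbf n}$ and $v_1,\dots,v_{\mathbf n}$. Define the linear map $\psi:\Lambda^{\mathbf n-1}A'\otimes V\to\Lambda^{\mathbf n}A'\otimes U$ by $$\psi(e_S\otimes v_k)=\sum_{\substack{1\le m\le\mathbf n\\ (m,k)\ne(\mathbf n,1)}} e_{m+k-1}\wedge e_S\otimes u_m,$$ where for $S=\{s_1<\dots<s_{\mathbf n-1}\}\subset\{1,\dots,2\mathbf n-1\}$, $e_S=e_{s_1}\wedge\cdots\wedge e_{s_{\mathbf n-1}}$. Then $\operatorname{rank}\psi=\mathbf n\binom{2\mathbf n-1}{\mathbf n}-1$; more precisely, the image of $\psi$ is the span of all basis vectors $e_P\otimes u_l$ ($P\subset\{1,\dots,2\mathbf n-1\}$, $|P|=\mathbf n$, $1\le l\le\mathbf n$) other than $e_{\{1,\dots,\mathbf n\}}\otimes u_{\mathbf n}$.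
   Context: This map is the Koszul flattening $\Lambda^{\mathbf n-1}A'\otimes V\to\Lambda^{\mathbf n}A'\otimes U$ of the reduced tensor $M^{red}_{\langle 1,1,\mathbf n\rangle}$ restricted via the linear map $x^i_j\mapsto e_{i+j-1}$. *)

theory Defs
  imports "HOL-Analysis.Analysis" "HOL-Library.Function_Algebras"
begin

text \<open>A vector of \<open>\<Lambda>^(n-1) A' \<otimes> V\<close> is a function on pairs (S,k)
  (coefficient of e_S \<otimes> v_k), supported on the index set \<open>src_idx n\<close>; a vector of
  \<open>\<Lambda>^n A' \<otimes> U\<close> is a function on pairs (P,l) (coefficient of e_P \<otimes> u_l),
  supported on \<open>tgt_idx n\<close>. Here e_S = e_{s_1} \<wedge> ... \<wedge> e_{s_r} with s_1 < ... < s_r.\<close>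

definition src_idx :: "nat \<Rightarrow> (nat set \<times> nat) set" where
  "src_idx n = {(S,k). S \<subseteq> {1..2*n-1} \<and> card S = n - 1 \<and> k \<in> {1..n}}"

definition tgt_idx :: "nat \<Rightarrow> (nat set \<times> nat) set" where
  "tgt_idx n = {(P,l). P \<subseteq> {1..2*n-1} \<and> card P = n \<and> l \<in> {1..n}}"

definition src_space :: "nat \<Rightarrow> (nat set \<times> nat \<Rightarrow> complex) set" where
  "src_space n = {f. \<forall>x. x \<notin> src_idx n \<longrightarrow> f x = 0}"

text \<open>Coefficient of e_P in e_j \<wedge> e_S: zero unless j \<notin> S and P = S \<union> {j};
  then the sign (-1)^#{s \<in> S. s < j}.\<close>
definition wedge_coeff :: "nat \<Rightarrow> nat set \<Rightarrow> nat set \<Rightarrow> complex" where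
  "wedge_coeff j S P =
     (if j \<notin> S \<and> P = insert j S then (-1) ^ card {s\<in>S. s < j} else 0)"

text \<open>Coefficient of e_P \<otimes> u_l in \<psi>(e_S \<otimes> v_k).\<close>
definition psi_coeff :: "nat \<Rightarrow> nat set \<times> nat \<Rightarrow> nat set \<times> nat \<Rightarrow> complex" where
  "psi_coeff n Sk Pl =
     (case Sk of (S,k) \<Rightarrow> case Pl of (P,l) \<Rightarrow>
        if 1 \<le> l \<and> l \<le> n \<and> (l,k) \<noteq> (n,1) then wedge_coeff (l+k-1) S P else 0)"

definition psi :: "nat \<Rightarrow> (nat set \<times> nat \<Rightarrow> complex) \<Rightarrow> (nat set \<times> nat \<Rightarrow> complex)" where
  "psi n f = (\<lambda>Pl. \<Sum>Sk\<in>src_idx n. f Sk * psi_coeff n Sk Pl)"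

definition cscale :: "complex \<Rightarrow> ('a \<Rightarrow> complex) \<Rightarrow> ('a \<Rightarrow> complex)" where
  "cscale c f = (\<lambda>x. c * f x)"

end

theory Submission
  imports Defs
begin

text \<open>The kernel of \<open>\<psi>\<close> is spanned by \<open>e\<^bsub>{1..n-1}\<^esub> \<otimes> v\<^sub>1\<close>. This is proved for the whole
  family of maps \<open>\<Lambda>\<^sup>r \<complex>\<^bsup>p+q-1\<^esup> \<otimes> \<complex>\<^sup>q \<rightarrow> \<Lambda>\<^bsup>r+1\<^esup> \<complex>\<^bsup>p+q-1\<^esup> \<otimes> \<complex>\<^sup>p\<close> by induction on \<open>p + q\<close>.
  With \<open>N = p + q - 1\<close>, the part of a kernel vector involving \<open>e\<^sub>N\<close> is a kernel vector of the
  \<open>(p-1, q, r-1)\<close> map, which is injective when \<open>r < p\<close>; once that part vanishes, the coefficient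
  of \<open>e\<^sub>N \<wedge> e\<^sub>S \<otimes> u\<^sub>p\<close> kills the \<open>v\<^sub>q\<close> column, leaving a kernel vector of the \<open>(p, q-1, r)\<close> map.
  So the images of the other source basis vectors are linearly independent. They are as many
  as the target basis vectors other than \<open>e\<^bsub>{1..n}\<^esub> \<otimes> u\<^sub>n\<close>, which no image involves, so they
  span exactly the coordinate subspace of those.\<close>

section \<open>Koszul maps of the multiplication tensor\<close>

text \<open>\<open>e\<^sub>j \<wedge> e\<^bsub>P-{j}\<^esub> = wedge_sign j P \<cdot> e\<^sub>P\<close> for \<open>j \<in> P\<close>.\<close>

definition wedge_sign :: "nat \<Rightarrow> nat set \<Rightarrow> complex" where
  "wedge_sign j P = (-1) ^ card {s\<in>P. s < j}"

lemma wedge_sign_nonzero: "wedge_sign j P \<noteq> 0"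
  by (simp add: wedge_sign_def)

lemma wedge_sign_insert_greater: "j < N \<Longrightarrow> wedge_sign j (insert N P) = wedge_sign j P"
  unfolding wedge_sign_def by (rule arg_cong[where f = "\<lambda>A. (-1) ^ card A"]) auto

text \<open>The map \<open>\<Lambda>\<^sup>r \<complex>\<^bsup>p+q-1\<^esup> \<otimes> \<complex>\<^sup>q \<rightarrow> \<Lambda>\<^bsup>r+1\<^esup> \<complex>\<^bsup>p+q-1\<^esup> \<otimes> \<complex>\<^sup>p\<close>,
  \<open>e\<^sub>S \<otimes> v\<^sub>k \<mapsto> \<Sum>\<^sub>m e\<^bsub>m+k-1\<^esub> \<wedge> e\<^sub>S \<otimes> u\<^sub>m\<close>, where for \<open>ex = True\<close> the term \<open>(m,k) = (p,1)\<close> is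
  omitted; \<open>psi n\<close> is the case \<open>ex = True\<close>, \<open>p = q = n\<close>, \<open>r = n - 1\<close>. A vector is in the kernel iff
  its support is as in \<open>koszul_supported\<close> and it satisfies \<open>koszul_kernel\<close>; in \<open>koszul_coeff\<close>,
  the coefficient of \<open>e\<^sub>P \<otimes> u\<^sub>m\<close>, the summation index is \<open>j = m + k - 1\<close>.\<close>

definition koszul_supported :: "nat \<Rightarrow> nat \<Rightarrow> nat \<Rightarrow> (nat set \<times> nat \<Rightarrow> complex) \<Rightarrow> bool" where
  "koszul_supported p q r f \<longleftrightarrow>
     (\<forall>S k. f (S,k) \<noteq> 0 \<longrightarrow> S \<subseteq> {1..p+q-1} \<and> card S = r \<and> 1 \<le> k \<and> k \<le> q)"

definition koszul_coeff ::
    "bool \<Rightarrow> nat \<Rightarrow> nat \<Rightarrow> (nat set \<times> nat \<Rightarrow> complex) \<Rightarrow> nat set \<Rightarrow> nat \<Rightarrow> complex" where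
  "koszul_coeff ex p q f P m =
     (\<Sum>j\<in>P. if m \<le> j \<and> j < q + m \<and> \<not> (ex \<and> m = p \<and> j = p)
             then wedge_sign j P * f (P - {j}, j + 1 - m) else 0)"

definition koszul_kernel :: "bool \<Rightarrow> nat \<Rightarrow> nat \<Rightarrow> nat \<Rightarrow> (nat set \<times> nat \<Rightarrow> complex) \<Rightarrow> bool" where
  "koszul_kernel ex p q r f \<longleftrightarrow>
     (\<forall>P m. P \<subseteq> {1..p+q-1} \<longrightarrow> card P = Suc r \<longrightarrow> 1 \<le> m \<longrightarrow> m \<le> p \<longrightarrow>
        koszul_coeff ex p q f P m = 0)"

lemma koszul_supportedD:
  "koszul_supported p q r f \<Longrightarrow> f (S,k) \<noteq> 0 \<Longrightarrow>
     S \<subseteq> {1..p+q-1} \<and> card S = r \<and> 1 \<le> k \<and> k \<le> q"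
  by (simp add: koszul_supported_def)

lemma koszul_kernelD:
  "koszul_kernel ex p q r f \<Longrightarrow> P \<subseteq> {1..p+q-1} \<Longrightarrow> card P = Suc r \<Longrightarrow> 1 \<le> m \<Longrightarrow> m \<le> p \<Longrightarrow>
     koszul_coeff ex p q f P m = 0"
  by (simp add: koszul_kernel_def)

definition top_slice :: "nat \<Rightarrow> (nat set \<times> nat \<Rightarrow> complex) \<Rightarrow> nat set \<times> nat \<Rightarrow> complex" where
  "top_slice N f = (\<lambda>(S,k). if N \<in> S then 0 else f (insert N S, k))"

lemma top_slice_eq_0_iff: "top_slice N f = 0 \<longleftrightarrow> (\<forall>S k. N \<in> S \<longrightarrow> f (S,k) = 0)"
proof
  assume slice: "top_slice N f = 0"
  show "\<forall>S k. N \<in> S \<longrightarrow> f (S,k) = 0"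
  proof (intro allI impI)
    fix S k
    assume "N \<in> S"
    have "top_slice N f (S - {N}, k) = 0"
      using slice by simp
    then show "f (S,k) = 0"
      using \<open>N \<in> S\<close> by (simp add: top_slice_def insert_absorb)
  qed
qed (auto simp: top_slice_def fun_eq_iff)

lemma koszul_supported_top_slice:
  assumes "koszul_supported p q r f" and "1 \<le> p"
  shows "koszul_supported (p-1) q (r-1) (top_slice (p+q-1) f)"
  unfolding koszul_supported_def
proof (intro allI impI)
  fix S k
  assume "top_slice (p+q-1) f (S,k) \<noteq> 0"
  then have N: "p+q-1 \<notin> S" and "f (insert (p+q-1) S, k) \<noteq> 0"
    by (auto simp: top_slice_def split: if_splits)
  then have S: "insert (p+q-1) S \<subseteq> {1..p+q-1}" "card (insert (p+q-1) S) = r" "1 \<le> k" "k \<le> q"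
    using koszul_supportedD[OF assms(1)] by blast+
  have "finite S"
    using S(1) finite_subset by auto
  then have "card S = r - 1"
    using S(2) N by simp
  moreover have "S \<subseteq> {1..p-1+q-1}"
  proof
    fix x
    assume "x \<in> S"
    then have "1 \<le> x" "x \<le> p+q-1" "x \<noteq> p+q-1"
      using S(1) N by auto
    then show "x \<in> {1..p-1+q-1}"
      using assms(2) by simp
  qed
  ultimately show "S \<subseteq> {1..p-1+q-1} \<and> card S = r-1 \<and> 1 \<le> k \<and> k \<le> q"
    using S by blast
qed

lemma koszul_kernel_top_slice:
  assumes "koszul_kernel ex p q r f" and "1 \<le> p" "1 \<le> q" "1 \<le> r"
  shows "koszul_kernel False (p-1) q (r-1) (top_slice (p+q-1) f)"
  unfolding koszul_kernel_def
proof (intro allI impI)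
  fix P0 m
  assume P0: "P0 \<subseteq> {1..p-1+q-1}" and card_P0: "card P0 = Suc (r-1)"
    and m: "1 \<le> m" "m \<le> p-1"
  define N where "N = p+q-1"
  have below_N: "j < N" if "j \<in> P0" for j
  proof -
    have "j \<le> p-1+q-1"
      using that P0 by auto
    then show ?thesis
      using assms(2,3) unfolding N_def by arith
  qed
  then have "N \<notin> P0"
    by blast
  have "finite P0"
    using P0 finite_subset by blast
  have "insert N P0 \<subseteq> {1..N}"
  proof
    fix x
    assume x: "x \<in> insert N P0"
    have "1 \<le> N"
      using assms(2,3) unfolding N_def by simp
    moreover have "1 \<le> x \<and> x < N" if "x \<in> P0"
      using P0 that below_N[OF that] by auto
    ultimately show "x \<in> {1..N}"
      using x by auto
  qed
  moreover have "card (insert N P0) = Suc r"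
    using \<open>finite P0\<close> \<open>N \<notin> P0\<close> card_P0 assms(4) by simp
  moreover have "m \<le> p"
    using m by simp
  ultimately have "koszul_coeff ex p q f (insert N P0) m = 0"
    using koszul_kernelD[OF assms(1)] m(1) unfolding N_def by blast
  moreover have "koszul_coeff ex p q f (insert N P0) m
      = koszul_coeff False (p-1) q (top_slice N f) P0 m"
  proof -
    have N_excluded: "\<not> (m \<le> N \<and> N < q + m \<and> \<not> (ex \<and> m = p \<and> N = p))"
      using m unfolding N_def by auto
    have "m \<noteq> p"
      using m assms(2) by simp
    have "koszul_coeff ex p q f (insert N P0) m
        = (\<Sum>j\<in>P0. if m \<le> j \<and> j < q + m \<and> \<not> (ex \<and> m = p \<and> j = p)
             then wedge_sign j (insert N P0) * f (insert N P0 - {j}, j + 1 - m) else 0)"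
      unfolding koszul_coeff_def
      by (simp only: sum.insert[OF \<open>finite P0\<close> \<open>N \<notin> P0\<close>] if_not_P[OF N_excluded] add_0_left)
    also have "\<dots> = koszul_coeff False (p-1) q (top_slice N f) P0 m"
      unfolding koszul_coeff_def
    proof (rule sum.cong[OF refl])
      fix j
      assume "j \<in> P0"
      then have "insert N P0 - {j} = insert N (P0 - {j})" "N \<notin> P0 - {j}"
        using below_N \<open>N \<notin> P0\<close> by auto
      then show "(if m \<le> j \<and> j < q + m \<and> \<not> (ex \<and> m = p \<and> j = p)
             then wedge_sign j (insert N P0) * f (insert N P0 - {j}, j + 1 - m) else 0)
          = (if m \<le> j \<and> j < q + m \<and> \<not> (False \<and> m = p - 1 \<and> j = p - 1)
             then wedge_sign j P0 * top_slice N f (P0 - {j}, j + 1 - m) else 0)"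
        using below_N[OF \<open>j \<in> P0\<close>] \<open>m \<noteq> p\<close>
        by (simp add: wedge_sign_insert_greater top_slice_def)
    qed
    finally show ?thesis .
  qed
  ultimately show "koszul_coeff False (p-1) q (top_slice (p+q-1) f) P0 m = 0"
    unfolding N_def by simp
qed

lemma koszul_last_column_vanishes:
  assumes supp: "koszul_supported p q r f" and ker: "koszul_kernel ex p q r f"
    and top: "\<And>S k. p+q-1 \<in> S \<Longrightarrow> f (S,k) = 0"
    and "1 \<le> p" "1 \<le> q" "ex \<longrightarrow> 2 \<le> q"
  shows "f (S,q) = 0"
proof (rule ccontr)
  assume nonzero: "f (S,q) \<noteq> 0"
  define N where "N = p+q-1"
  have S: "S \<subseteq> {1..N}" "card S = r"
    using koszul_supportedD[OF supp nonzero] unfolding N_def by auto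
  have "N \<notin> S"
    using top nonzero unfolding N_def by blast
  have "finite S"
    using S(1) finite_subset by blast
  have "insert N S \<subseteq> {1..p+q-1}" "card (insert N S) = Suc r"
    using S \<open>N \<notin> S\<close> \<open>finite S\<close> assms(4,5) unfolding N_def by auto
  then have "koszul_coeff ex p q f (insert N S) p = 0"
    using assms(4) by (intro koszul_kernelD[OF ker]) auto
  moreover have "koszul_coeff ex p q f (insert N S) p = wedge_sign N (insert N S) * f (S,q)"
  proof -
    have N_term: "p \<le> N \<and> N < q + p \<and> \<not> (ex \<and> p = p \<and> N = p)" "N + 1 - p = q"
      using assms(4-6) unfolding N_def by auto
    have "koszul_coeff ex p q f (insert N S) p
        = (\<Sum>j\<in>insert N S. if j = N then wedge_sign N (insert N S) * f (S,q) else 0)"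
      unfolding koszul_coeff_def
    proof (rule sum.cong[OF refl])
      fix j
      assume j: "j \<in> insert N S"
      show "(if p \<le> j \<and> j < q + p \<and> \<not> (ex \<and> p = p \<and> j = p)
            then wedge_sign j (insert N S) * f (insert N S - {j}, j + 1 - p) else 0)
          = (if j = N then wedge_sign N (insert N S) * f (S,q) else 0)"
      proof (cases "j = N")
        case True
        then show ?thesis
          using N_term \<open>N \<notin> S\<close> by simp
      next
        case False
        then have "N \<in> insert N S - {j}"
          by blast
        then show ?thesis
          using top False unfolding N_def by simp
      qed
    qed
    also have "\<dots> = wedge_sign N (insert N S) * f (S,q)"
      using \<open>finite S\<close> by simp
    finally show ?thesis .
  qed
  ultimately show False
    using nonzero wedge_sign_nonzero by simp
qed

lemma koszul_supported_shrink:
  assumes "koszul_supported p q r f"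
    and "\<And>S k. p+q-1 \<in> S \<Longrightarrow> f (S,k) = 0" and "\<And>S. f (S,q) = 0" and "1 \<le> q"
  shows "koszul_supported p (q-1) r f"
  unfolding koszul_supported_def
proof (intro allI impI)
  fix S k
  assume nonzero: "f (S,k) \<noteq> 0"
  then have S: "S \<subseteq> {1..p+q-1}" "card S = r" "1 \<le> k" "k \<le> q"
    using koszul_supportedD[OF assms(1)] by blast+
  have "k \<noteq> q" "p+q-1 \<notin> S"
    using nonzero assms(2,3) by auto
  have "S \<subseteq> {1..p+(q-1)-1}"
  proof
    fix x
    assume "x \<in> S"
    then have "1 \<le> x" "x \<le> p+q-1" "x \<noteq> p+q-1"
      using S(1) \<open>p+q-1 \<notin> S\<close> by auto
    then show "x \<in> {1..p+(q-1)-1}"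
      using assms(4) by simp
  qed
  then show "S \<subseteq> {1..p+(q-1)-1} \<and> card S = r \<and> 1 \<le> k \<and> k \<le> q-1"
    using S \<open>k \<noteq> q\<close> by auto
qed

lemma koszul_kernel_shrink:
  assumes "koszul_kernel ex p q r f" and "\<And>S. f (S,q) = 0" and "1 \<le> q"
  shows "koszul_kernel ex p (q-1) r f"
  unfolding koszul_kernel_def
proof (intro allI impI)
  fix P m
  assume P: "P \<subseteq> {1..p+(q-1)-1}" and "card P = Suc r" "1 \<le> m" "m \<le> p"
  moreover have "P \<subseteq> {1..p+q-1}"
    by (rule subset_trans[OF P]) auto
  ultimately have "koszul_coeff ex p q f P m = 0"
    by (intro koszul_kernelD[OF assms(1)])
  moreover have "koszul_coeff ex p q f P m = koszul_coeff ex p (q-1) f P m"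
    unfolding koszul_coeff_def
  proof (rule sum.cong[OF refl])
    fix j
    show "(if m \<le> j \<and> j < q + m \<and> \<not> (ex \<and> m = p \<and> j = p)
            then wedge_sign j P * f (P - {j}, j + 1 - m) else 0)
        = (if m \<le> j \<and> j < q - 1 + m \<and> \<not> (ex \<and> m = p \<and> j = p)
            then wedge_sign j P * f (P - {j}, j + 1 - m) else 0)"
    proof (cases "j = q - 1 + m")
      case True
      then show ?thesis
        using assms(2,3) by simp
    next
      case False
      then have "j < q + m \<longleftrightarrow> j < q - 1 + m"
        using assms(3) by arith
      then show ?thesis
        by simp
    qed
  qed
  ultimately show "koszul_coeff ex p (q-1) f P m = 0"
    by simp
qed

lemma koszul_reduce:
  assumes supp: "koszul_supported p q r f" and ker: "koszul_kernel ex p q r f"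
    and "1 \<le> p" "1 \<le> q" "ex \<longrightarrow> 2 \<le> q"
    and trivial_below: "\<And>g. 1 \<le> r \<Longrightarrow> koszul_supported (p-1) q (r-1) g \<Longrightarrow>
                               koszul_kernel False (p-1) q (r-1) g \<Longrightarrow> g = 0"
  shows "koszul_supported p (q-1) r f \<and> koszul_kernel ex p (q-1) r f"
proof -
  have top: "f (S,k) = 0" if "p+q-1 \<in> S" for S k
  proof (cases "r = 0")
    case True
    have "S = {}" if "f (S,k) \<noteq> 0"
      using koszul_supportedD[OF supp that] True finite_subset[of S "{1..p+q-1}"] by auto
    then show ?thesis
      using \<open>p+q-1 \<in> S\<close> by blast
  next
    case False
    then have "top_slice (p+q-1) f = 0"
      using assms(3,4) by (intro trivial_below koszul_supported_top_slice[OF supp]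
          koszul_kernel_top_slice[OF ker]) auto
    then show ?thesis
      using that top_slice_eq_0_iff by blast
  qed
  have last_column: "f (S,q) = 0" for S
    using koszul_last_column_vanishes[OF supp ker top assms(3-5)] by blast
  show ?thesis
    using koszul_supported_shrink[OF supp top last_column assms(4)]
      koszul_kernel_shrink[OF ker last_column assms(4)] by blast
qed

lemma koszul_supported_no_columns: "koszul_supported p 0 r f \<Longrightarrow> f = 0"
  by (auto simp: koszul_supported_def fun_eq_iff)

theorem koszul_kernel_trivial:
  "koszul_supported p q r f \<Longrightarrow> koszul_kernel False p q r f \<Longrightarrow> r < p \<Longrightarrow> f = 0"
proof (induction "p+q" arbitrary: p q r f rule: less_induct)
  case less
  show ?case
  proof (cases "q = 0")
    case True
    then show ?thesis
      using koszul_supported_no_columns less.prems(1) by simp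
  next
    case False
    have "koszul_supported p (q-1) r f \<and> koszul_kernel False p (q-1) r f"
      using less.prems False
      by (intro koszul_reduce) (auto intro: less.hyps[of "p-1" q "r-1"])
    then show ?thesis
      using less.hyps[of p "q-1" r f] False less.prems(3) by simp
  qed
qed

lemma koszul_exceptional_one_column:
  assumes "2 \<le> p" and supp: "koszul_supported p 1 (p-1) f"
    and ker: "koszul_kernel True p 1 (p-1) f" and "(S,k) \<noteq> ({1..p-1},1)"
  shows "f (S,k) = 0"
proof (rule ccontr)
  assume nonzero: "f (S,k) \<noteq> 0"
  then have S: "S \<subseteq> {1..p}" "card S = p-1" and "k = 1"
    using koszul_supportedD[OF supp nonzero] by auto
  then have "S \<noteq> {1..p-1}"
    using assms(4) by blast
  then have "\<not> {1..p-1} \<subseteq> S"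
    using S card_subset_eq[of S "{1..p-1}"] finite_subset[OF S(1)] by auto
  then obtain j0 where j0: "j0 \<in> {1..p-1}" "j0 \<notin> S"
    by blast
  have "S \<subseteq> {1..p} - {j0}" "card ({1..p} - {j0}) = p-1"
    using S(1) j0 by auto
  then have S_eq: "S = {1..p} - {j0}"
    using card_subset_eq[of "{1..p} - {j0}" S] S(2) by simp
  have "j0 \<in> {1..p}"
    using j0 by auto
  have "0 = koszul_coeff True p 1 f {1..p} j0"
    using assms(1) j0 by (intro koszul_kernelD[OF ker, symmetric]) auto
  also have "\<dots> = (\<Sum>j\<in>{1..p}. if j = j0 then wedge_sign j {1..p} * f ({1..p} - {j}, 1) else 0)"
    unfolding koszul_coeff_def using j0
    by (intro sum.cong) (auto simp: less_Suc_eq_le dest: le_antisym)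
  also have "\<dots> = wedge_sign j0 {1..p} * f (S,k)"
    using \<open>j0 \<in> {1..p}\<close> S_eq \<open>k = 1\<close> by (simp only: sum.delta finite_atLeastAtMost if_True)
  finally have "wedge_sign j0 {1..p} * f (S,k) = 0"
    by simp
  then show False
    using nonzero wedge_sign_nonzero by simp
qed

theorem koszul_kernel_exceptional:
  "2 \<le> p \<Longrightarrow> koszul_supported p q (p-1) f \<Longrightarrow> koszul_kernel True p q (p-1) f \<Longrightarrow>
     (S,k) \<noteq> ({1..p-1},1) \<Longrightarrow> f (S,k) = 0"
proof (induction q arbitrary: f)
  case 0
  then show ?case
    using koszul_supported_no_columns[OF "0.prems"(2)] by simp
next
  case (Suc q)
  show ?case
  proof (cases "q = 0")
    case True
    then show ?thesis
      using koszul_exceptional_one_column Suc.prems by simp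
  next
    case False
    have "koszul_supported p q (p-1) f \<and> koszul_kernel True p q (p-1) f"
      using koszul_reduce[of p "Suc q" "p-1" f True] Suc.prems False koszul_kernel_trivial
      by simp
    then show ?thesis
      using Suc.IH Suc.prems by simp
  qed
qed

section \<open>The kernel of \<open>\<psi>\<close>\<close>

lemma finite_src_idx: "finite (src_idx n)"
  by (rule finite_subset[of _ "Pow {1..2*n-1} \<times> {1..n}"]) (auto simp: src_idx_def)

lemma finite_tgt_idx: "finite (tgt_idx n)"
  by (rule finite_subset[of _ "Pow {1..2*n-1} \<times> {1..n}"]) (auto simp: tgt_idx_def)

lemma card_src_idx: "1 \<le> n \<Longrightarrow> card (src_idx n) = n * ((2*n-1) choose n)"
proof -
  assume "1 \<le> n"
  have "src_idx n = {S. S \<subseteq> {1..2*n-1} \<and> card S = n-1} \<times> {1..n}"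
    unfolding src_idx_def by auto
  then have "card (src_idx n) = ((2*n-1) choose (n-1)) * n"
    by (simp add: card_cartesian_product n_subsets)
  moreover have "(2*n-1) choose (n-1) = (2*n-1) choose n"
    using binomial_symmetric[of "n-1" "2*n-1"] \<open>1 \<le> n\<close> by simp
  ultimately show ?thesis
    by simp
qed

lemma card_tgt_idx: "card (tgt_idx n) = n * ((2*n-1) choose n)"
proof -
  have "tgt_idx n = {P. P \<subseteq> {1..2*n-1} \<and> card P = n} \<times> {1..n}"
    unfolding tgt_idx_def by auto
  then show ?thesis
    by (simp add: card_cartesian_product n_subsets)
qed

lemma src_space_iff_koszul_supported: "f \<in> src_space n \<longleftrightarrow> koszul_supported n n (n-1) f"
proof -
  have "n + n - 1 = 2*n - 1"
    by simp
  then show ?thesis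
    unfolding src_space_def src_idx_def koszul_supported_def by auto
qed

lemma psi_coeff_nonzeroD:
  assumes "psi_coeff n (S,k) (P,l) \<noteq> 0"
  shows "1 \<le> l \<and> l \<le> n \<and> (l,k) \<noteq> (n,1) \<and> l+k-1 \<notin> S \<and> P = insert (l+k-1) S"
  using assms unfolding psi_coeff_def wedge_coeff_def by (auto split: if_splits)

lemma psi_coeff_remove:
  assumes "j \<in> P" "1 \<le> l" "l \<le> n" "l \<le> j" "\<not> (l = n \<and> j = n)"
  shows "psi_coeff n (P - {j}, j+1-l) (P,l) = wedge_sign j P"
proof -
  have "(l, j+1-l) \<noteq> (n,1)" "l + (j+1-l) - 1 = j" "insert j (P - {j}) = P"
    "{s \<in> P - {j}. s < j} = {s \<in> P. s < j}"
    using assms by auto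
  then show ?thesis
    using assms unfolding psi_coeff_def wedge_coeff_def wedge_sign_def by simp
qed

lemma psi_eq_koszul_coeff:
  assumes P: "P \<subseteq> {1..2*n-1}" "card P = n" and l: "1 \<le> l" "l \<le> n"
  shows "psi n f (P,l) = koszul_coeff True n n f P l"
proof -
  define J where "J = {j\<in>P. l \<le> j \<and> j < n + l \<and> \<not> (l = n \<and> j = n)}"
  define h where "h = (\<lambda>j. (P - {j}, j+1-l))"
  have "finite P"
    using P(1) finite_subset by blast
  have "inj_on h J"
    by (rule inj_onI) (auto simp: h_def J_def)
  have "h ` J \<subseteq> src_idx n"
  proof
    fix x
    assume "x \<in> h ` J"
    then obtain j where j: "j \<in> P" "l \<le> j" "j < n + l" and x: "x = h j"
      unfolding J_def by blast
    have "card (P - {j}) = n - 1"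
      using j(1) P(2) \<open>finite P\<close> by simp
    then show "x \<in> src_idx n"
      using P(1) j l unfolding x h_def src_idx_def by auto
  qed
  moreover have "psi_coeff n x (P,l) = 0" if "x \<in> src_idx n - h ` J" for x
  proof (rule ccontr)
    obtain S k where x: "x = (S,k)"
      by fastforce
    assume "psi_coeff n x (P,l) \<noteq> 0"
    then have "1 \<le> l \<and> l \<le> n \<and> (l,k) \<noteq> (n,1) \<and> l+k-1 \<notin> S \<and> P = insert (l+k-1) S"
      using psi_coeff_nonzeroD unfolding x by blast
    moreover have "1 \<le> k" "k \<le> n"
      using that unfolding x src_idx_def by auto
    ultimately have "l+k-1 \<in> J" "x = h (l+k-1)"
      unfolding J_def h_def x by auto
    then show False
      using that by blast
  qed
  ultimately have "psi n f (P,l) = (\<Sum>x\<in>h ` J. f x * psi_coeff n x (P,l))"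
    unfolding psi_def by (intro sum.mono_neutral_right[OF finite_src_idx]) auto
  also have "\<dots> = (\<Sum>j\<in>J. f (h j) * psi_coeff n (h j) (P,l))"
    using sum.reindex[OF \<open>inj_on h J\<close>] by simp
  also have "\<dots> = (\<Sum>j\<in>J. wedge_sign j P * f (P - {j}, j+1-l))"
  proof (rule sum.cong[OF refl])
    fix j
    assume "j \<in> J"
    then have "psi_coeff n (h j) (P,l) = wedge_sign j P"
      unfolding J_def h_def using l by (intro psi_coeff_remove) auto
    then show "f (h j) * psi_coeff n (h j) (P,l) = wedge_sign j P * f (P - {j}, j+1-l)"
      by (simp add: h_def)
  qed
  also have "\<dots> = koszul_coeff True n n f P l"
    unfolding koszul_coeff_def J_def by (simp only: sum.inter_filter[OF \<open>finite P\<close>] simp_thms)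
  finally show ?thesis .
qed

theorem psi_kernel:
  assumes "2 \<le> n" and "f \<in> src_space n" and "psi n f = 0" and "x \<noteq> ({1..n-1},1)"
  shows "f x = 0"
proof -
  have "koszul_kernel True n n (n-1) f"
    unfolding koszul_kernel_def
  proof (intro allI impI)
    fix P m
    assume "P \<subseteq> {1..n+n-1}" "card P = Suc (n-1)" "1 \<le> m" "m \<le> n"
    moreover have "n + n - 1 = 2*n - 1" "Suc (n-1) = n"
      using assms(1) by auto
    ultimately show "koszul_coeff True n n f P m = 0"
      using psi_eq_koszul_coeff[of P n m f] assms(3) by simp
  qed
  then show ?thesis
    using koszul_kernel_exceptional[OF assms(1)] assms(2,4)
    unfolding src_space_iff_koszul_supported by (cases x) blast
qed

lemma psi_vanishes_outside:
  assumes "x \<notin> tgt_idx n - {({1..n},n)}"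
  shows "psi n f x = 0"
proof -
  obtain P l where x: "x = (P,l)"
    by fastforce
  have "psi_coeff n (S,k) (P,l) = 0" if "(S,k) \<in> src_idx n" for S k
  proof (rule ccontr)
    assume "psi_coeff n (S,k) (P,l) \<noteq> 0"
    then have l: "1 \<le> l" "l \<le> n" and "(l,k) \<noteq> (n,1)" and P: "l+k-1 \<notin> S" "P = insert (l+k-1) S"
      using psi_coeff_nonzeroD by blast+
    have S: "S \<subseteq> {1..2*n-1}" "card S = n-1" "1 \<le> k" "k \<le> n"
      using that unfolding src_idx_def by auto
    then have "finite S"
      using finite_subset by blast
    then have "(P,l) \<in> tgt_idx n"
      using S P l unfolding tgt_idx_def by auto
    moreover have "P \<noteq> {1..n} \<or> l \<noteq> n"
    proof -
      have "l+k-1 \<in> P"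
        using P by blast
      then show ?thesis
        using \<open>(l,k) \<noteq> (n,1)\<close> S(3) by auto
    qed
    ultimately show False
      using assms unfolding x by auto
  qed
  then show ?thesis
    unfolding x psi_def by (auto intro: sum.neutral)
qed

section \<open>The image of \<open>\<psi>\<close>\<close>

context vector_space
begin

lemma span_subset_span_independent:
  assumes "finite B" and "independent E" and "E \<subseteq> span B" and "card B \<le> card E"
  shows "span B \<subseteq> span E"
proof -
  have "B \<subseteq> span E"
  proof
    fix b
    assume "b \<in> B"
    show "b \<in> span E"
    proof (rule ccontr)
      assume "b \<notin> span E"
      then have "independent (insert b E)" "b \<notin> E"
        using independent_insertI[OF _ assms(2)] span_base by blast+
      moreover have "insert b E \<subseteq> span B"
        using assms(3) \<open>b \<in> B\<close> span_base by blast
      ultimately have "card (insert b E) \<le> card B"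
        using independent_span_bound[OF assms(1)] by blast
      moreover have "finite E"
        using independent_span_bound[OF assms(1-3)] by blast
      ultimately show False
        using assms(4) \<open>b \<notin> E\<close> by simp
    qed
  qed
  then show ?thesis
    using span_minimal subspace_span by blast
qed

end

interpretation cs: vector_space "cscale :: complex \<Rightarrow> ('a \<Rightarrow> complex) \<Rightarrow> 'a \<Rightarrow> complex"
  by unfold_locales (simp_all add: cscale_def fun_eq_iff algebra_simps)

definition supported_on :: "'a set \<Rightarrow> ('a \<Rightarrow> complex) set" where
  "supported_on X = {g. \<forall>x. x \<notin> X \<longrightarrow> g x = 0}"

definition coord_vec :: "'a \<Rightarrow> 'a \<Rightarrow> complex" where
  "coord_vec x = (\<lambda>y. if y = x then 1 else 0)"

lemma inj_coord_vec: "inj coord_vec"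
proof (rule injI)
  fix x y :: 'a
  assume "coord_vec x = coord_vec y"
  then have "coord_vec x x = coord_vec y x"
    by simp
  then show "x = y"
    by (simp add: coord_vec_def split: if_splits)
qed

lemma card_coord_vec_image: "card (coord_vec ` X) = card X"
  by (rule card_image[OF inj_on_subset[OF inj_coord_vec subset_UNIV]])

lemma coord_vec_in_supported_on: "x \<in> X \<Longrightarrow> coord_vec x \<in> supported_on X"
  by (simp add: supported_on_def coord_vec_def)

lemma subspace_supported_on: "cs.subspace (supported_on X)"
  by (auto simp: cs.subspace_def supported_on_def cscale_def)

lemma sum_apply_fun: "(\<Sum>x\<in>A. f x) y = (\<Sum>x\<in>A. f x y)"
  by (induction A rule: infinite_finite_induct) auto

lemma coord_expansion:
  assumes "finite X" and "g \<in> supported_on X"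
  shows "g = (\<Sum>x\<in>X. cscale (g x) (coord_vec x))"
proof
  fix y
  have "(\<Sum>x\<in>X. cscale (g x) (coord_vec x)) y = (\<Sum>x\<in>X. if x = y then g y else 0)"
    unfolding sum_apply_fun by (rule sum.cong[OF refl]) (simp add: cscale_def coord_vec_def)
  also have "\<dots> = g y"
    using assms unfolding supported_on_def by (cases "y \<in> X") (simp_all add: sum.delta)
  finally show "g y = (\<Sum>x\<in>X. cscale (g x) (coord_vec x)) y"
    by simp
qed

lemma supported_on_eq_span:
  assumes "finite X"
  shows "supported_on X = cs.span (coord_vec ` X)"
proof (rule cs.span_subspace[symmetric])
  show "coord_vec ` X \<subseteq> supported_on X"
    by (rule image_subsetI) (rule coord_vec_in_supported_on)
  show "supported_on X \<subseteq> cs.span (coord_vec ` X)"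
  proof
    fix g
    assume "g \<in> supported_on X"
    then have "g = (\<Sum>x\<in>X. cscale (g x) (coord_vec x))"
      by (rule coord_expansion[OF assms])
    also have "\<dots> \<in> cs.span (coord_vec ` X)"
      by (intro cs.span_sum cs.span_scale cs.span_base imageI)
    finally show "g \<in> cs.span (coord_vec ` X)" .
  qed
  show "cs.subspace (supported_on X)"
    by (rule subspace_supported_on)
qed

lemma independent_coord_vecs: "cs.independent (coord_vec ` X)"
  unfolding cs.independent_explicit_finite_subsets
proof (intro allI impI ballI)
  fix V u v
  assume V: "V \<subseteq> coord_vec ` X" and "finite V" and sum_0: "(\<Sum>w\<in>V. cscale (u w) w) = 0"
    and "v \<in> V"
  obtain x where v: "v = coord_vec x"
    using V \<open>v \<in> V\<close> by blast
  have "0 = (\<Sum>w\<in>V. cscale (u w) w) x"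
    using sum_0 by simp
  also have "\<dots> = (\<Sum>w\<in>V. u w * w x)"
    by (simp add: sum_apply_fun cscale_def)
  also have "\<dots> = (\<Sum>w\<in>V. if w = v then u w else 0)"
  proof (rule sum.cong[OF refl])
    fix w
    assume "w \<in> V"
    then obtain y where w: "w = coord_vec y"
      using V by blast
    show "u w * w x = (if w = v then u w else 0)"
    proof (cases "w = v")
      case True
      then show ?thesis
        unfolding v coord_vec_def by simp
    next
      case False
      then have "y \<noteq> x"
        using w v by auto
      then show ?thesis
        using False unfolding w coord_vec_def by simp
    qed
  qed
  also have "\<dots> = u v"
    using \<open>finite V\<close> \<open>v \<in> V\<close> by (simp add: sum.delta')
  finally show "u v = 0"
    by simp
qed

lemma dim_supported_on:
  assumes "finite X"
  shows "cs.dim (supported_on X) = card X"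
proof -
  have "cs.dim (supported_on X) = card (coord_vec ` X)"
    unfolding supported_on_eq_span[OF assms]
    by (rule cs.dim_span_eq_card_independent[OF independent_coord_vecs])
  also have "\<dots> = card X"
    by (rule card_coord_vec_image)
  finally show ?thesis .
qed

lemma linear_psi: "Vector_Spaces.linear cscale cscale (psi n)"
  by (intro linear_module_homI module_hom.intro cs.module_axioms module_hom_axioms.intro)
    (simp_all add: psi_def cscale_def fun_eq_iff distrib_right sum.distrib sum_distrib_left mult.assoc)

theorem psi_image_eq:
  assumes "2 \<le> n"
  shows "psi n ` src_space n = supported_on (tgt_idx n - {({1..n},n)})"
proof -
  interpret psi: Vector_Spaces.linear cscale cscale "psi n"
    by (rule linear_psi)
  define s0 where "s0 = ({1..n-1}, 1::nat)"
  define B where "B = src_idx n - {s0}"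
  define T where "T = tgt_idx n - {({1..n},n)}"
  define E where "E = psi n ` coord_vec ` B"
  have "finite B" "finite T"
    unfolding B_def T_def using finite_src_idx finite_tgt_idx by auto
  have src_space_eq: "src_space n = supported_on (src_idx n)"
    unfolding src_space_def supported_on_def ..
  have "s0 \<in> src_idx n" "({1..n},n) \<in> tgt_idx n"
    using assms unfolding s0_def src_idx_def tgt_idx_def by auto
  then have "card B = card T"
    using assms card_src_idx card_tgt_idx finite_src_idx finite_tgt_idx
    unfolding B_def T_def by (simp add: card_Diff_singleton)
  have kernel_trivial: "f = 0" if "f \<in> supported_on B" and "psi n f = 0" for f
  proof
    fix x
    have "f \<in> src_space n"
      using that(1) unfolding src_space_def supported_on_def B_def by simp
    show "f x = 0 x"
    proof (cases "x = s0")
      case True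
      have "s0 \<notin> B"
        unfolding B_def by simp
      then have "f s0 = 0"
        using that(1) unfolding supported_on_def by blast
      then show ?thesis
        using True by simp
    next
      case False
      then show ?thesis
        using psi_kernel[OF assms \<open>f \<in> src_space n\<close> that(2)] unfolding s0_def by simp
    qed
  qed
  have inj: "inj_on (psi n) (cs.span (coord_vec ` B))"
    unfolding supported_on_eq_span[OF \<open>finite B\<close>, symmetric]
      psi.inj_on_iff_eq_0[OF subspace_supported_on]
    by (intro ballI impI) (rule kernel_trivial)
  have "cs.independent E"
    unfolding E_def by (rule psi.independent_injective_image[OF independent_coord_vecs inj])
  moreover have "card E = card (coord_vec ` T)"
    using card_image[OF inj_on_subset[OF inj cs.span_superset]] \<open>card B = card T\<close>
      card_coord_vec_image[of B] card_coord_vec_image[of T]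
    unfolding E_def by simp
  moreover have image_subset: "psi n ` src_space n \<subseteq> supported_on T"
    by (auto simp: T_def supported_on_def psi_vanishes_outside)
  moreover have E_subset: "E \<subseteq> psi n ` src_space n"
    unfolding E_def src_space_eq B_def
    by (intro image_mono image_subsetI coord_vec_in_supported_on) simp
  ultimately have "cs.span (coord_vec ` T) \<subseteq> cs.span E"
    unfolding supported_on_eq_span[OF \<open>finite T\<close>]
    by (intro cs.span_subset_span_independent finite_imageI \<open>finite T\<close>) auto
  moreover have "cs.span E \<subseteq> psi n ` src_space n"
    using E_subset psi.subspace_image[OF subspace_supported_on]
    unfolding src_space_eq by (rule cs.span_minimal)
  ultimately show ?thesis
    using image_subset supported_on_eq_span[OF \<open>finite T\<close>] unfolding T_def by auto
qed

theorem mainTheorem11: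
  fixes n :: nat
  assumes "n \<ge> 2"
  shows "psi n ` src_space n =
           {g. \<forall>x. x \<notin> tgt_idx n - {({1..n}, n)} \<longrightarrow> g x = 0}
       \<and> vector_space.dim cscale (psi n ` src_space n) = n * ((2*n-1) choose n) - 1"
proof -
  have "({1..n},n) \<in> tgt_idx n"
    using assms unfolding tgt_idx_def by auto
  then have "card (tgt_idx n - {({1..n},n)}) = n * ((2*n-1) choose n) - 1"
    by (simp add: card_Diff_singleton finite_tgt_idx card_tgt_idx)
  then show ?thesis
    using psi_image_eq[OF assms] dim_supported_on[of "tgt_idx n - {({1..n},n)}"] finite_tgt_idx
    unfolding supported_on_def by simp
qed

end
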